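(* For every integer $d\ge3$, the map $\nu\mapsto\vartheta_{d,\nu}$ is strictly increasing, and for every $\nu>0$ the map $d\mapsto\vartheta_{d,\nu}$ is strictly increasing. Moreover, for every $d\ge3$, $$\lim_{\nu\downarrow0}\vartheta_{d,\nu}=\vartheta_{d,0}=\frac{d-2}{d-1},\qquad \lim_{\nu\to\infty}\vartheta_{d,\nu}=1,$$ and for every $\nu>0$, $\lim_{d\to\infty}\vartheta_{d,\nu}=1$.
   Context: For $d\ge2$ and $\nu\in[0,\infty)$ let $\beta_d=\sqrt{d-1}$, $\rho_d=2\sqrt{d-1}/d$, let $\Delta_{d,\nu}$ be the continued fraction $\Delta_{d,\nu}=\cfrac{1}{a_1-\cfrac{1}{a_2-\cfrac{1}{a_3-\cdots}}}$ with $a_i=\frac{2+i\nu}{\rho_d}$ (convergent since $a_i\ge2$), and define $\vartheta_{d,\nu}=1-\Delta_{d,\nu}/\beta_d$. *)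

theory Defs
  imports "HOL-Analysis.Analysis"
begin

definition beta_d :: "nat \<Rightarrow> real" where
  "beta_d d = sqrt (real d - 1)"

definition rho_d :: "nat \<Rightarrow> real" where
  "rho_d d = 2 * sqrt (real d - 1) / real d"

definition cf_coeff :: "nat \<Rightarrow> real \<Rightarrow> nat \<Rightarrow> real" where
  "cf_coeff d \<nu> i = (2 + real i * \<nu>) / rho_d d"

fun cf_trunc :: "(nat \<Rightarrow> real) \<Rightarrow> nat \<Rightarrow> nat \<Rightarrow> real" where
  "cf_trunc a 0 k = 0"
| "cf_trunc a (Suc n) k = 1 / (a k - cf_trunc a n (Suc k))"

definition Delta :: "nat \<Rightarrow> real \<Rightarrow> real" where
  "Delta d \<nu> = lim (\<lambda>n. cf_trunc (cf_coeff d \<nu>) n 1)"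

definition theta :: "nat \<Rightarrow> real \<Rightarrow> real" where
  "theta d \<nu> = 1 - Delta d \<nu> / beta_d d"

end

theory Submission
  imports Defs
begin

text \<open>All coefficients of the continued fraction are at least \<open>c = 2 / \<rho>\<^sub>d = d / \<beta>\<^sub>d\<close>, and
  \<open>r = 1 / \<beta>\<^sub>d\<close> is the smaller fixed point of \<open>t \<mapsto> 1 / (c - t)\<close>. Hence the convergents
  increase and stay in \<open>[0, r]\<close>, so the continued fraction converges, and its value is
  antitone in the coefficients, strictly so if the first coefficient strictly increases. Since
  the coefficients grow with \<open>\<nu>\<close> and with \<open>d\<close>, and \<open>\<beta>\<^sub>d\<close> grows with \<open>d\<close>, \<open>\<vartheta>\<close> is strictly
  increasing in both. For \<open>\<nu> = 0\<close> the coefficients are constant and the value is the fixed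
  point \<open>r\<close>. As \<open>\<nu> \<down> 0\<close> every convergent is continuous, which together with monotonicity gives
  continuity of \<open>\<Delta>\<close>; finally \<open>\<Delta>\<^sub>d\<^sub>,\<^sub>\<nu> \<le> \<rho>\<^sub>d / \<nu>\<close> and \<open>\<Delta>\<^sub>d\<^sub>,\<^sub>\<nu> / \<beta>\<^sub>d \<le> 1 / (d - 1)\<close> give
  the limits at infinity.\<close>

definition cf_value :: "(nat \<Rightarrow> real) \<Rightarrow> nat \<Rightarrow> real" where
  "cf_value a k = lim (\<lambda>n. cf_trunc a n k)"

lemma Delta_eq_cf_value: "Delta d \<nu> = cf_value (cf_coeff d \<nu>) 1"
  unfolding Delta_def cf_value_def ..

locale cf_bounded =
  fixes c r :: real and a :: "nat \<Rightarrow> real"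
  assumes r_nonneg: "0 \<le> r" and r_less: "r < c" and r_invariant: "1 \<le> r * (c - r)"
    and coeff_ge: "\<And>k. c \<le> a k"
begin

lemma cf_bounded_larger:
  assumes "\<And>k. a k \<le> b k"
  shows "cf_bounded c r b"
  using assms coeff_ge order_trans r_nonneg r_less r_invariant by unfold_locales blast+

text \<open>The map \<open>t \<mapsto> 1 / (a k - t)\<close> sends \<open>[0, r]\<close> into \<open>[0, 1 / (c - r)] \<subseteq> [0, r]\<close>.\<close>

lemma cf_trunc_bounds: "0 \<le> cf_trunc a n k \<and> cf_trunc a n k \<le> r"
proof (induction n arbitrary: k)
  case 0
  show ?case using r_nonneg by simp
next
  case (Suc n)
  define t where "t = cf_trunc a n (Suc k)"
  have t: "0 \<le> t" "t \<le> r" using Suc t_def by auto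
  have cr: "0 < c - r" using r_less by simp
  have denom: "c - r \<le> a k - t" using coeff_ge[of k] t by simp
  have "1 / (a k - t) \<le> 1 / (c - r)" using denom cr by (simp add: frac_le)
  also have "\<dots> \<le> r" using r_invariant cr by (simp add: pos_divide_le_eq mult.commute)
  finally show ?case using denom cr by (simp add: t_def[symmetric])
qed

lemma cf_trunc_denom_pos: "0 < a k - cf_trunc a n j"
  using cf_trunc_bounds[of n j] coeff_ge[of k] r_less by auto

lemma incseq_cf_trunc: "incseq (\<lambda>n. cf_trunc a n k)"
proof -
  have "cf_trunc a n k \<le> cf_trunc a (Suc n) k" for n
  proof (induction n arbitrary: k)
    case 0
    show ?case using cf_trunc_denom_pos[of k 0 "Suc k"] by simp
  next
    case (Suc n)
    show ?case
      using cf_trunc_denom_pos[of k "Suc n" "Suc k"] Suc[of "Suc k"] by (simp add: frac_le)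
  qed
  then show ?thesis by (rule incseq_SucI)
qed

lemma cf_trunc_tendsto: "(\<lambda>n. cf_trunc a n k) \<longlonglongrightarrow> cf_value a k"
proof -
  have "bdd_above (range (\<lambda>n. cf_trunc a n k))"
    using cf_trunc_bounds by (intro bdd_aboveI2[where M = r]) auto
  then have "convergent (\<lambda>n. cf_trunc a n k)"
    using incseq_cf_trunc LIMSEQ_incseq_SUP convergent_def by blast
  then show ?thesis unfolding cf_value_def by (simp add: convergent_LIMSEQ_iff)
qed

lemma cf_value_bounds: "0 \<le> cf_value a k" "cf_value a k \<le> r"
  using cf_trunc_tendsto[of k] cf_trunc_bounds by (auto intro: LIMSEQ_le_const LIMSEQ_le_const2)

lemma cf_trunc_le_cf_value: "cf_trunc a n k \<le> cf_value a k"
  using incseq_cf_trunc cf_trunc_tendsto by (rule incseq_le)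

lemma cf_value_denom_pos: "0 < a k - cf_value a (Suc k)"
  using cf_value_bounds(2)[of "Suc k"] coeff_ge[of k] r_less by auto

lemma cf_value_eq: "cf_value a k = 1 / (a k - cf_value a (Suc k))"
proof -
  have "(\<lambda>n. cf_trunc a (Suc n) k) \<longlonglongrightarrow> cf_value a k"
    using cf_trunc_tendsto by (rule LIMSEQ_Suc)
  moreover have "(\<lambda>n. cf_trunc a (Suc n) k) \<longlonglongrightarrow> 1 / (a k - cf_value a (Suc k))"
    unfolding cf_trunc.simps using cf_value_denom_pos[of k]
    by (intro tendsto_intros cf_trunc_tendsto) auto
  ultimately show ?thesis using LIMSEQ_unique by blast
qed

lemma cf_value_pos: "0 < cf_value a k"
  using cf_value_eq[of k] cf_value_denom_pos[of k] by simp

lemma cf_value_le_first_coeff: "cf_value a k \<le> 1 / (a k - r)"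
proof -
  have "0 < a k - r" using coeff_ge[of k] r_less by simp
  then show ?thesis
    using cf_value_eq[of k] cf_value_bounds(2)[of "Suc k"] by (simp add: frac_le)
qed

lemma cf_trunc_antimono:
  assumes "\<And>k. a k \<le> b k"
  shows "cf_trunc b n k \<le> cf_trunc a n k"
proof -
  interpret b: cf_bounded c r b using assms by (rule cf_bounded_larger)
  show ?thesis
  proof (induction n arbitrary: k)
    case 0
    show ?case by simp
  next
    case (Suc n)
    show ?case
      using cf_trunc_denom_pos[of k n "Suc k"] Suc[of "Suc k"] assms[of k] by (simp add: frac_le)
  qed
qed

lemma cf_value_antimono:
  assumes "\<And>k. a k \<le> b k"
  shows "cf_value b k \<le> cf_value a k"
proof -
  interpret b: cf_bounded c r b using assms by (rule cf_bounded_larger)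
  show ?thesis
    using cf_trunc_antimono[OF assms] by (intro LIMSEQ_le[OF b.cf_trunc_tendsto cf_trunc_tendsto]) auto
qed

lemma cf_value_strict_antimono:
  assumes "\<And>k. a k \<le> b k" and "a k < b k"
  shows "cf_value b k < cf_value a k"
proof -
  interpret b: cf_bounded c r b using assms(1) by (rule cf_bounded_larger)
  have "a k - cf_value a (Suc k) < b k - cf_value b (Suc k)"
    using cf_value_antimono[OF assms(1), of "Suc k"] assms(2) by simp
  then show ?thesis
    using cf_value_eq[of k] b.cf_value_eq[of k] cf_value_denom_pos[of k] by (simp add: frac_less2)
qed

end

lemma cf_value_const:
  assumes "0 \<le> r" and "r * (c - r) = 1" and "2 * r \<le> c"
  shows "cf_value (\<lambda>_. c) k = r"
proof -
  have "r < c" using assms by (smt (verit) mult_nonneg_nonpos)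
  then interpret cf_bounded c r "\<lambda>_. c" using assms by unfold_locales auto
  have shift: "cf_trunc (\<lambda>_. c) n k = cf_trunc (\<lambda>_. c) n j" for n k j
    by (induction n arbitrary: k j) simp_all
  have same: "cf_value (\<lambda>_. c) (Suc k) = cf_value (\<lambda>_. c) k"
    unfolding cf_value_def shift[of _ "Suc k" k] ..
  define x where "x = cf_value (\<lambda>_. c) k"
  have pos: "0 < c - x" using cf_value_denom_pos[of k] unfolding same x_def .
  have "x = 1 / (c - x)" using cf_value_eq[of k] unfolding same x_def[symmetric] .
  then have "x * (c - x) = 1" using pos by (subst (asm) nonzero_eq_divide_eq) auto
  then have "(x - r) * (c - r - x) = 0" using assms(2) by algebra
  moreover have "x \<le> r" unfolding x_def by (rule cf_value_bounds(2))
  ultimately show ?thesis using assms(3) unfolding x_def by auto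
qed

lemma tendsto_cf_trunc:
  assumes "cf_bounded c r b" and "\<And>k. ((\<lambda>x. a x k) \<longlongrightarrow> b k) F"
  shows "((\<lambda>x. cf_trunc (a x) n k) \<longlongrightarrow> cf_trunc b n k) F"
proof (induction n arbitrary: k)
  case 0
  show ?case by simp
next
  case (Suc n)
  have "b k - cf_trunc b n (Suc k) \<noteq> 0"
    using cf_bounded.cf_trunc_denom_pos[OF assms(1)] by (metis less_irrefl)
  then show ?case unfolding cf_trunc.simps by (intro tendsto_intros assms(2) Suc)
qed

text \<open>Lower semicontinuity comes from the convergents, which are continuous in the
  coefficients and bound the value from below; upper semicontinuity from antitonicity.\<close>

lemma tendsto_cf_value_from_above:
  assumes b: "cf_bounded c r b" and lim: "\<And>k. ((\<lambda>x. a x k) \<longlongrightarrow> b k) F"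
    and above: "\<forall>\<^sub>F x in F. \<forall>k. b k \<le> a x k"
  shows "((\<lambda>x. cf_value (a x) k) \<longlongrightarrow> cf_value b k) F"
proof (rule order_tendstoI)
  fix y assume less: "cf_value b k < y"
  show "\<forall>\<^sub>F x in F. cf_value (a x) k < y"
    using above by eventually_elim (meson less b cf_bounded.cf_value_antimono le_less_trans)
next
  fix y assume "y < cf_value b k"
  then have "\<forall>\<^sub>F n in sequentially. y < cf_trunc b n k"
    using order_tendstoD(1)[OF cf_bounded.cf_trunc_tendsto[OF b]] by blast
  then obtain n where "y < cf_trunc b n k" by (meson eventually_sequentially order_refl)
  then have "\<forall>\<^sub>F x in F. y < cf_trunc (a x) n k"
    using order_tendstoD(1)[OF tendsto_cf_trunc[OF b lim]] by blast
  with above show "\<forall>\<^sub>F x in F. y < cf_value (a x) k"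
  proof eventually_elim
    case (elim x)
    then have "cf_bounded c r (a x)" using b cf_bounded.cf_bounded_larger by blast
    then show ?case using elim cf_bounded.cf_trunc_le_cf_value less_le_trans by blast
  qed
qed

lemma beta_d_pos: "2 \<le> d \<Longrightarrow> 0 < beta_d d"
  by (simp add: beta_d_def)

lemma rho_d_pos: "2 \<le> d \<Longrightarrow> 0 < rho_d d"
  by (simp add: rho_d_def)

lemma two_div_rho_d: "2 / rho_d d = real d / beta_d d"
  by (simp add: rho_d_def beta_d_def)

lemma cf_bounded_cf_coeff:
  assumes d: "2 \<le> d" and \<nu>: "0 \<le> \<nu>"
  shows "cf_bounded (2 / rho_d d) (1 / beta_d d) (cf_coeff d \<nu>)"
proof
  have \<beta>: "0 < beta_d d" "(beta_d d)\<^sup>2 = real d - 1"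
    using d by (simp_all add: beta_d_def)
  show "0 \<le> 1 / beta_d d" using \<beta> by simp
  show "1 / beta_d d < 2 / rho_d d"
    using \<beta> d by (simp add: two_div_rho_d divide_strict_right_mono)
  have "1 / beta_d d * (2 / rho_d d - 1 / beta_d d) = (real d - 1) / (beta_d d)\<^sup>2"
    using \<beta> by (simp add: two_div_rho_d field_simps power2_eq_square)
  then show "1 \<le> 1 / beta_d d * (2 / rho_d d - 1 / beta_d d)"
    using \<beta> d by simp
  show "2 / rho_d d \<le> cf_coeff d \<nu> k" for k
    unfolding cf_coeff_def using rho_d_pos[OF d] \<nu> by (simp add: divide_right_mono)
qed

lemma cf_coeff_mono_nu: "2 \<le> d \<Longrightarrow> \<nu>\<^sub>1 \<le> \<nu>\<^sub>2 \<Longrightarrow> cf_coeff d \<nu>\<^sub>1 k \<le> cf_coeff d \<nu>\<^sub>2 k"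
  unfolding cf_coeff_def using rho_d_pos[of d]
  by (intro divide_right_mono) (auto intro: mult_left_mono)

lemma cf_coeff_strict_mono_nu: "2 \<le> d \<Longrightarrow> \<nu>\<^sub>1 < \<nu>\<^sub>2 \<Longrightarrow> 0 < k \<Longrightarrow> cf_coeff d \<nu>\<^sub>1 k < cf_coeff d \<nu>\<^sub>2 k"
  unfolding cf_coeff_def using rho_d_pos[of d] by (simp add: divide_strict_right_mono)

text \<open>\<open>\<rho>\<^sub>d\<^sup>2 = 4 (d - 1) / d\<^sup>2\<close>, and \<open>(d\<^sub>2 - 1) d\<^sub>1\<^sup>2 \<le> (d\<^sub>1 - 1) d\<^sub>2\<^sup>2\<close> factors as
  \<open>0 \<le> (d\<^sub>2 - d\<^sub>1) ((d\<^sub>1 - 1) (d\<^sub>2 - 1) - 1)\<close>.\<close>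

lemma rho_d_antimono:
  assumes "2 \<le> d\<^sub>1" and "d\<^sub>1 \<le> d\<^sub>2"
  shows "rho_d d\<^sub>2 \<le> rho_d d\<^sub>1"
proof -
  have sq: "rho_d d = 2 * sqrt ((real d - 1) / (real d)\<^sup>2)" if "2 \<le> d" for d
    unfolding rho_d_def using that by (simp add: real_sqrt_divide)
  have "1 \<le> (real d\<^sub>1 - 1) * (real d\<^sub>2 - 1)" using assms mult_mono[of 1 "real d\<^sub>1 - 1" 1 "real d\<^sub>2 - 1"] by auto
  then have "0 \<le> (real d\<^sub>2 - real d\<^sub>1) * ((real d\<^sub>1 - 1) * (real d\<^sub>2 - 1) - 1)"
    using assms by simp
  then have "(real d\<^sub>2 - 1) * (real d\<^sub>1)\<^sup>2 \<le> (real d\<^sub>1 - 1) * (real d\<^sub>2)\<^sup>2"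
    by (simp add: algebra_simps power2_eq_square)
  then have "(real d\<^sub>2 - 1) / (real d\<^sub>2)\<^sup>2 \<le> (real d\<^sub>1 - 1) / (real d\<^sub>1)\<^sup>2"
    using assms by (simp add: divide_simps)
  then show ?thesis using assms sq by simp
qed

lemma cf_coeff_mono_d:
  assumes "2 \<le> d\<^sub>1" and "d\<^sub>1 \<le> d\<^sub>2" and "0 \<le> \<nu>"
  shows "cf_coeff d\<^sub>1 \<nu> k \<le> cf_coeff d\<^sub>2 \<nu> k"
  unfolding cf_coeff_def using rho_d_antimono[OF assms(1,2)] rho_d_pos[of d\<^sub>2] assms
  by (intro divide_left_mono) auto

lemma Delta_zero:
  assumes "2 \<le> d"
  shows "Delta d 0 = 1 / beta_d d"
proof -
  have "cf_coeff d 0 = (\<lambda>_. 2 / rho_d d)" by (simp add: cf_coeff_def fun_eq_iff)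
  moreover have "1 / beta_d d * (2 / rho_d d - 1 / beta_d d) = 1"
    and "2 * (1 / beta_d d) \<le> 2 / rho_d d"
    using assms beta_d_pos[OF assms]
    by (simp_all add: two_div_rho_d beta_d_def field_simps divide_right_mono)
  ultimately show ?thesis
    using beta_d_pos[OF assms] by (simp add: Delta_eq_cf_value cf_value_const)
qed

lemma theta_zero: "2 \<le> d \<Longrightarrow> theta d 0 = (real d - 2) / (real d - 1)"
  by (simp add: theta_def Delta_zero beta_d_def divide_divide_eq_left field_simps)

lemma strict_mono_on_theta_nu:
  assumes d: "2 \<le> d"
  shows "strict_mono_on {0..} (\<lambda>\<nu>. theta d \<nu>)"
proof (rule strict_mono_onI)
  fix \<nu>\<^sub>1 \<nu>\<^sub>2 :: real
  assume "\<nu>\<^sub>1 \<in> {0..}" and "\<nu>\<^sub>1 < \<nu>\<^sub>2"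
  then have "Delta d \<nu>\<^sub>2 < Delta d \<nu>\<^sub>1"
    unfolding Delta_eq_cf_value
    by (intro cf_bounded.cf_value_strict_antimono[OF cf_bounded_cf_coeff]
        cf_coeff_mono_nu cf_coeff_strict_mono_nu d) auto
  then show "theta d \<nu>\<^sub>1 < theta d \<nu>\<^sub>2"
    unfolding theta_def using beta_d_pos[OF d] by (simp add: divide_strict_right_mono)
qed

lemma strict_mono_on_theta_d:
  assumes \<nu>: "0 \<le> \<nu>"
  shows "strict_mono_on {2..} (\<lambda>d. theta d \<nu>)"
proof (rule strict_mono_onI)
  fix d\<^sub>1 d\<^sub>2 :: nat
  assume "d\<^sub>1 \<in> {2..}" and "d\<^sub>1 < d\<^sub>2"
  then have d: "2 \<le> d\<^sub>1" "d\<^sub>1 \<le> d\<^sub>2" "2 \<le> d\<^sub>2" by auto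
  have le: "Delta d\<^sub>2 \<nu> \<le> Delta d\<^sub>1 \<nu>"
    unfolding Delta_eq_cf_value
    by (intro cf_bounded.cf_value_antimono[OF cf_bounded_cf_coeff] cf_coeff_mono_d d \<nu>)
  have pos: "0 < Delta d\<^sub>2 \<nu>"
    unfolding Delta_eq_cf_value by (rule cf_bounded.cf_value_pos[OF cf_bounded_cf_coeff[OF d(3) \<nu>]])
  have \<beta>: "0 < beta_d d\<^sub>1" "beta_d d\<^sub>1 < beta_d d\<^sub>2"
    using d \<open>d\<^sub>1 < d\<^sub>2\<close> by (auto simp: beta_d_def)
  have "Delta d\<^sub>2 \<nu> / beta_d d\<^sub>2 < Delta d\<^sub>2 \<nu> / beta_d d\<^sub>1"
    using pos \<beta> by (simp add: divide_strict_left_mono)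
  also have "\<dots> \<le> Delta d\<^sub>1 \<nu> / beta_d d\<^sub>1"
    using le \<beta> by (simp add: divide_right_mono)
  finally show "theta d\<^sub>1 \<nu> < theta d\<^sub>2 \<nu>" unfolding theta_def by simp
qed

lemma theta_tendsto_at_right_0:
  assumes d: "2 \<le> d"
  shows "((\<lambda>\<nu>. theta d \<nu>) \<longlongrightarrow> (real d - 2) / (real d - 1)) (at_right 0)"
proof -
  have coeff: "((\<lambda>\<nu>. cf_coeff d \<nu> k) \<longlongrightarrow> cf_coeff d 0 k) (at_right 0)" for k
    unfolding cf_coeff_def using rho_d_pos[OF d] by (intro tendsto_intros) auto
  have above: "\<forall>\<^sub>F \<nu> in at_right 0. \<forall>k. cf_coeff d 0 k \<le> cf_coeff d \<nu> k"
    using eventually_at_right_less[of "0::real"]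
    by eventually_elim (simp add: cf_coeff_mono_nu d)
  have "((\<lambda>\<nu>. Delta d \<nu>) \<longlongrightarrow> Delta d 0) (at_right 0)"
    unfolding Delta_eq_cf_value
    using tendsto_cf_value_from_above[OF cf_bounded_cf_coeff[OF d order_refl] coeff above] .
  then have "((\<lambda>\<nu>. theta d \<nu>) \<longlongrightarrow> theta d 0) (at_right 0)"
    unfolding theta_def using beta_d_pos[OF d] by (intro tendsto_intros) auto
  then show ?thesis using theta_zero[OF d] by simp
qed

lemma Delta_le_rho_d_div:
  assumes d: "2 \<le> d" and \<nu>: "0 < \<nu>"
  shows "Delta d \<nu> \<le> rho_d d / \<nu>"
proof -
  interpret cf_bounded "2 / rho_d d" "1 / beta_d d" "cf_coeff d \<nu>"
    using cf_bounded_cf_coeff d \<nu> by simp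
  have "cf_coeff d \<nu> 1 = 2 / rho_d d + \<nu> / rho_d d"
    unfolding cf_coeff_def by (simp add: add_divide_distrib)
  then have "\<nu> / rho_d d \<le> cf_coeff d \<nu> 1 - 1 / beta_d d" using r_less by simp
  moreover have "0 < \<nu> / rho_d d" using \<nu> rho_d_pos[OF d] by simp
  ultimately have "1 / (cf_coeff d \<nu> 1 - 1 / beta_d d) \<le> 1 / (\<nu> / rho_d d)"
    by (intro frac_le) auto
  then show ?thesis using cf_value_le_first_coeff[of 1] Delta_eq_cf_value by simp
qed

lemma theta_tendsto_at_top:
  assumes d: "2 \<le> d"
  shows "((\<lambda>\<nu>. theta d \<nu>) \<longlongrightarrow> 1) at_top"
proof -
  have "((\<lambda>\<nu>. Delta d \<nu>) \<longlongrightarrow> 0) at_top"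
  proof (rule tendsto_sandwich)
    show "\<forall>\<^sub>F \<nu> in at_top. 0 \<le> Delta d \<nu>"
      using eventually_ge_at_top[of "0::real"]
      by eventually_elim
        (simp add: Delta_eq_cf_value cf_bounded.cf_value_bounds(1)[OF cf_bounded_cf_coeff[OF d]])
    show "\<forall>\<^sub>F \<nu> in at_top. Delta d \<nu> \<le> rho_d d / \<nu>"
      using eventually_gt_at_top[of "0::real"] by eventually_elim (rule Delta_le_rho_d_div[OF d])
    show "((\<lambda>\<nu>. rho_d d / \<nu>) \<longlongrightarrow> 0) at_top"
      by (intro tendsto_divide_0[OF tendsto_const] filterlim_at_top_imp_at_infinity filterlim_ident)
  qed simp
  then have "((\<lambda>\<nu>. 1 - Delta d \<nu> / beta_d d) \<longlongrightarrow> 1 - 0 / beta_d d) at_top"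
    using beta_d_pos[OF d] by (intro tendsto_intros) auto
  then show ?thesis unfolding theta_def by simp
qed

lemma theta_tendsto_sequentially:
  assumes \<nu>: "0 \<le> \<nu>"
  shows "((\<lambda>d. theta d \<nu>) \<longlongrightarrow> 1) sequentially"
proof -
  have "((\<lambda>d. Delta d \<nu> / beta_d d) \<longlongrightarrow> 0) sequentially"
  proof (rule tendsto_sandwich)
    show "\<forall>\<^sub>F d in sequentially. 0 \<le> Delta d \<nu> / beta_d d"
      using eventually_ge_at_top[of "2::nat"]
      by eventually_elim
        (simp add: Delta_eq_cf_value beta_d_def cf_bounded.cf_value_bounds(1)[OF cf_bounded_cf_coeff[OF _ \<nu>]])
    show "\<forall>\<^sub>F d in sequentially. Delta d \<nu> / beta_d d \<le> 2 / real d"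
      using eventually_ge_at_top[of "2::nat"]
    proof eventually_elim
      case (elim d)
      have \<beta>: "0 < beta_d d" "(beta_d d)\<^sup>2 = real d - 1"
        using elim by (simp_all add: beta_d_def)
      have "Delta d \<nu> \<le> 1 / beta_d d"
        using cf_bounded.cf_value_bounds(2)[OF cf_bounded_cf_coeff[OF elim \<nu>]]
        by (simp add: Delta_eq_cf_value)
      then have "Delta d \<nu> / beta_d d \<le> 1 / beta_d d / beta_d d"
        by (rule divide_right_mono) (use \<beta> in simp)
      also have "\<dots> = 1 / (real d - 1)"
        using \<beta> by (simp add: power2_eq_square)
      also have "\<dots> \<le> 2 / real d" using elim by (simp add: field_simps)
      finally show ?case .
    qed
  qed (simp_all add: lim_const_over_n)
  then have "((\<lambda>d. 1 - Delta d \<nu> / beta_d d) \<longlongrightarrow> 1 - 0) sequentially"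
    by (intro tendsto_intros)
  then show ?thesis unfolding theta_def by simp
qed

theorem proposition2p7:
  shows "(\<forall>d::nat. d \<ge> 3 \<longrightarrow> strict_mono_on {0..} (\<lambda>\<nu>. theta d \<nu>))
    \<and> (\<forall>\<nu>::real. \<nu> > 0 \<longrightarrow> strict_mono_on {3..} (\<lambda>d::nat. theta d \<nu>))
    \<and> (\<forall>d::nat. d \<ge> 3 \<longrightarrow>
          theta d 0 = (real d - 2) / (real d - 1)
        \<and> ((\<lambda>\<nu>. theta d \<nu>) \<longlongrightarrow> (real d - 2) / (real d - 1)) (at_right 0)
        \<and> ((\<lambda>\<nu>. theta d \<nu>) \<longlongrightarrow> 1) at_top)
    \<and> (\<forall>\<nu>::real. \<nu> > 0 \<longrightarrow> ((\<lambda>d::nat. theta d \<nu>) \<longlongrightarrow> 1) sequentially)"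
proof (intro conjI allI impI)
  fix d :: nat assume "d \<ge> 3"
  then have d: "2 \<le> d" by simp
  show "strict_mono_on {0..} (\<lambda>\<nu>. theta d \<nu>)" using strict_mono_on_theta_nu[OF d] .
  show "theta d 0 = (real d - 2) / (real d - 1)" using theta_zero[OF d] .
  show "((\<lambda>\<nu>. theta d \<nu>) \<longlongrightarrow> (real d - 2) / (real d - 1)) (at_right 0)"
    using theta_tendsto_at_right_0[OF d] .
  show "((\<lambda>\<nu>. theta d \<nu>) \<longlongrightarrow> 1) at_top" using theta_tendsto_at_top[OF d] .
next
  fix \<nu> :: real assume "\<nu> > 0"
  then have \<nu>: "0 \<le> \<nu>" by simp
  show "strict_mono_on {3..} (\<lambda>d::nat. theta d \<nu>)"
    using strict_mono_on_theta_d[OF \<nu>] by (rule monotone_on_subset) auto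
  show "((\<lambda>d::nat. theta d \<nu>) \<longlongrightarrow> 1) sequentially" using theta_tendsto_sequentially[OF \<nu>] .
qed

end
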